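(* For $N\ge1$ let $U=-e^{2\pi i/N}\begin{pmatrix}1/2&-\sqrt{3}/2\\ \sqrt3/2&1/2\end{pmatrix}$, $|\psi_i\rangle=(U^i|0\rangle)^{\otimes N}$ ($i=0,1,2$), each with prior $1/3$, shared among $N$ parties each holding one qubit. Let $P^{opt}_N$ be the optimal minimum-error success probability and $P^{LOCC}_N$ the supremum of success probabilities achievable by $N$-party LOCC measurements. Then $\lim_{N\to\infty}P^{LOCC}_N=\lim_{N\to\infty}P^{opt}_N=1$; in particular $P^{opt}_N-P^{LOCC}_N\to0$.
   Context: The success probability of a three-outcome POVM $\{\Pi_i\}$ is $\tfrac13\sum_i\langle\psi_i|\Pi_i|\psi_i\rangle$. $N$-party LOCC means measurements implementable by local operations on each party's qubit together with classical communication among the parties. *)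

theory Defs
  imports Complex_Main
begin

text \<open>N-qubit register: computational basis indexed by bool lists of length N
  (entry k = qubit of party k; False = |0>, True = |1>).\<close>

type_synonym qvec = "bool list \<Rightarrow> complex"
type_synonym qop = "bool list \<Rightarrow> bool list \<Rightarrow> complex"
type_synonym op2 = "bool \<Rightarrow> bool \<Rightarrow> complex"
type_synonym vec2 = "bool \<Rightarrow> complex"

definition bits :: "nat \<Rightarrow> bool list set" where
  "bits N = {xs. length xs = N}"

definition mv :: "nat \<Rightarrow> qop \<Rightarrow> qvec \<Rightarrow> qvec" where
  "mv N M v = (\<lambda>x. \<Sum>y\<in>bits N. M x y * v y)"

definition inner :: "nat \<Rightarrow> qvec \<Rightarrow> qvec \<Rightarrow> complex" where
  "inner N u v = (\<Sum>x\<in>bits N. cnj (u x) * v x)"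

definition idop :: qop where
  "idop x y = (if x = y then 1 else 0)"

definition psd :: "nat \<Rightarrow> qop \<Rightarrow> bool" where
  "psd N M \<longleftrightarrow> (\<forall>v. inner N v (mv N M v) \<in> \<real> \<and> 0 \<le> Re (inner N v (mv N M v)))"

definition povm3 :: "nat \<Rightarrow> (nat \<Rightarrow> qop) \<Rightarrow> bool" where
  "povm3 N P \<longleftrightarrow> (\<forall>i<3. psd N (P i)) \<and>
     (\<forall>x\<in>bits N. \<forall>y\<in>bits N. (\<Sum>i<3. P i x y) = idop x y)"

definition success :: "nat \<Rightarrow> (nat \<Rightarrow> qop) \<Rightarrow> (nat \<Rightarrow> qvec) \<Rightarrow> real" where
  "success N P \<psi> = (1/3) * (\<Sum>i<3. Re (inner N (\<psi> i) (mv N (P i) (\<psi> i))))"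

definition P_opt :: "nat \<Rightarrow> (nat \<Rightarrow> qvec) \<Rightarrow> real" where
  "P_opt N \<psi> = Sup {success N P \<psi> | P. povm3 N P}"

text \<open>At a node, party k applies a local instrument
  (Kraus operators on its qubit, K^dag K summing to identity), announces the outcome,
  and the protocol continues in the subtree for that outcome.\<close>

datatype locc = Guess nat | Measure nat "(op2 \<times> locc) list"

definition local_op :: "nat \<Rightarrow> op2 \<Rightarrow> qop" where
  "local_op k A x y =
     (if length x = length y \<and> (\<forall>j<length x. j \<noteq> k \<longrightarrow> x ! j = y ! j)
      then A (x ! k) (y ! k) else 0)"

definition kraus_complete :: "op2 list \<Rightarrow> bool" where
  "kraus_complete Ks \<longleftrightarrow>
     (\<forall>a b. sum_list (map (\<lambda>K. \<Sum>c\<in>UNIV. cnj (K c a) * K c b) Ks) = (if a = b then 1 else 0))"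

inductive wf_locc :: "nat \<Rightarrow> locc \<Rightarrow> bool" for N where
  "j < 3 \<Longrightarrow> wf_locc N (Guess j)"
| "k < N \<Longrightarrow> kraus_complete (map fst cs) \<Longrightarrow> \<forall>p\<in>set cs. wf_locc N (snd p)
     \<Longrightarrow> wf_locc N (Measure k cs)"

text \<open>Probability (for unnormalised post-measurement vector v) of ending with guess i.\<close>
fun guess_prob :: "nat \<Rightarrow> locc \<Rightarrow> qvec \<Rightarrow> nat \<Rightarrow> real" where
  "guess_prob N (Guess j) v i = (if j = i then Re (inner N v v) else 0)"
| "guess_prob N (Measure k cs) v i =
     sum_list (map (\<lambda>p. guess_prob N (snd p) (mv N (local_op k (fst p)) v) i) cs)"

definition locc_success :: "nat \<Rightarrow> locc \<Rightarrow> (nat \<Rightarrow> qvec) \<Rightarrow> real" where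
  "locc_success N T \<psi> = (1/3) * (\<Sum>i<3. guess_prob N T (\<psi> i) i)"

definition P_LOCC :: "nat \<Rightarrow> (nat \<Rightarrow> qvec) \<Rightarrow> real" where
  "P_LOCC N \<psi> = Sup {locc_success N T \<psi> | T. wf_locc N T}"

definition app2 :: "op2 \<Rightarrow> vec2 \<Rightarrow> vec2" where
  "app2 A u = (\<lambda>a. \<Sum>b\<in>UNIV. A a b * u b)"

definition ket0 :: vec2 where
  "ket0 a = (if a then 0 else 1)"

definition Rot :: op2 where
  "Rot a b = (if \<not> a \<and> \<not> b then 1/2 else if \<not> a \<and> b then - (sqrt 3 / 2)
              else if a \<and> \<not> b then sqrt 3 / 2 else 1/2)"

definition Umat :: "nat \<Rightarrow> op2" where
  "Umat N a b = - exp (2 * complex_of_real pi * \<i> / of_nat N) * Rot a b"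

definition psi :: "nat \<Rightarrow> nat \<Rightarrow> qvec" where
  "psi N i = (\<lambda>x. \<Prod>k<length x. ((app2 (Umat N) ^^ i) ket0) (x ! k))"

end

theory Submission
  imports Defs
begin

text \<open>Up to the global phase phase N ^ i, the qubit U^i|0> is the real unit vector
  (cos (pi i / 3), sin (pi i / 3)), and two distinct such vectors have squared overlap 1/4.
  Party k tests the hypothesis k mod 3: it projects its qubit onto the vector of that index or
  onto the orthogonal vector.  The orthogonal outcome rules the hypothesis out, and it never
  occurs for the true state.  A false hypothesis survives one test with probability 1/4, hence
  all tests addressed to it with probability at most 4 ^ -(N div 3).  Guessing the least
  hypothesis not ruled out therefore errs with probability at most 3 * 4 ^ -(N div 3).  Every
  LOCC protocol induces a POVM with the same success probability, and no POVM succeeds with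
  probability above 1 on normalised states, so the LOCC and the optimal success probabilities
  are squeezed between 1 - 3 * 4 ^ -(N div 3) and 1.\<close>

lemma finite_bits [simp]: "finite (bits N)"
proof -
  have "bits N = {xs. set xs \<subseteq> UNIV \<and> length xs = N}" by (auto simp: bits_def)
  thus ?thesis using finite_lists_length_eq[of "UNIV::bool set" N] by simp
qed

lemma bits_0 [simp]: "bits 0 = {[]}"
  by (auto simp: bits_def)

lemma sum_bits_Suc: "(\<Sum>x\<in>bits (Suc n). g x) = (\<Sum>b\<in>UNIV. \<Sum>xs\<in>bits n. g (b # xs))"
proof -
  have bits_Suc: "bits (Suc n) = (\<lambda>(b,xs). b # xs) ` (UNIV \<times> bits n)"
    by (auto simp: bits_def length_Suc_conv image_iff)
  have inj: "inj_on (\<lambda>(b,xs). b # xs) (UNIV \<times> bits n)" by (auto simp: inj_on_def)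
  show ?thesis unfolding bits_Suc sum.reindex[OF inj] sum.cartesian_product by (rule sum.cong) auto
qed

lemma sum_cnj_mult_self: "(\<Sum>a\<in>A. cnj (g a) * g a) = complex_of_real (\<Sum>a\<in>A. (cmod (g a))\<^sup>2)"
proof -
  have "cnj (g a) * g a = complex_of_real ((cmod (g a))\<^sup>2)" for a
    by (subst complex_norm_square) (simp add: mult.commute)
  thus ?thesis unfolding of_real_sum by simp
qed

lemma inner_cong:
  "(\<And>x. x \<in> bits N \<Longrightarrow> u x = u' x) \<Longrightarrow> (\<And>x. x \<in> bits N \<Longrightarrow> v x = v' x)
    \<Longrightarrow> inner N u v = inner N u' v'"
  unfolding inner_def by (rule sum.cong) auto

lemma mv_cong: "(\<And>x. x \<in> bits N \<Longrightarrow> v x = v' x) \<Longrightarrow> mv N M v = mv N M v'"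
  unfolding mv_def by (intro ext sum.cong) auto

lemma mv_idop: "x \<in> bits N \<Longrightarrow> mv N idop v x = v x"
proof -
  assume x: "x \<in> bits N"
  have "mv N idop v x = (\<Sum>y\<in>bits N. if y = x then v y else 0)"
    unfolding mv_def idop_def by (rule sum.cong) auto
  thus ?thesis using x by simp
qed

lemma inner_mv_idop: "inner N v (mv N idop v) = inner N v v"
  by (rule inner_cong) (auto simp: mv_idop)

definition sqnorm2 :: "vec2 \<Rightarrow> real" where
  "sqnorm2 u = (\<Sum>a\<in>UNIV. (cmod (u a))\<^sup>2)"

definition prod_vec :: "(nat \<Rightarrow> vec2) \<Rightarrow> qvec" where
  "prod_vec f x = (\<Prod>k<length x. f k (x ! k))"

lemma prod_vec_Cons: "prod_vec f (b # xs) = f 0 b * prod_vec (\<lambda>k. f (Suc k)) xs"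
  unfolding prod_vec_def length_Cons prod.lessThan_Suc_shift by simp

lemma inner_prod_vec: "inner N (prod_vec f) (prod_vec g) = (\<Prod>k<N. \<Sum>a\<in>UNIV. cnj (f k a) * g k a)"
proof (induction N arbitrary: f g)
  case 0
  then show ?case by (simp add: inner_def prod_vec_def)
next
  case (Suc n)
  have "inner (Suc n) (prod_vec f) (prod_vec g) = (\<Sum>b\<in>UNIV. \<Sum>xs\<in>bits n. cnj (f 0 b) * g 0 b *
      (cnj (prod_vec (\<lambda>k. f (Suc k)) xs) * prod_vec (\<lambda>k. g (Suc k)) xs))"
    unfolding inner_def sum_bits_Suc prod_vec_Cons by (simp add: algebra_simps)
  also have "\<dots> = (\<Sum>b\<in>UNIV. cnj (f 0 b) * g 0 b) *
      inner n (prod_vec (\<lambda>k. f (Suc k))) (prod_vec (\<lambda>k. g (Suc k)))"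
    by (simp add: inner_def sum_product)
  also have "\<dots> = (\<Prod>k<Suc n. \<Sum>a\<in>UNIV. cnj (f k a) * g k a)"
    unfolding Suc.IH by (simp only: prod.lessThan_Suc_shift)
  finally show ?case .
qed

lemma inner_prod_vec_self: "Re (inner N (prod_vec f) (prod_vec f)) = (\<Prod>k<N. sqnorm2 (f k))"
  unfolding inner_prod_vec sum_cnj_mult_self sqnorm2_def of_real_prod[symmetric] Re_complex_of_real ..

definition differ_only_at :: "nat \<Rightarrow> bool list \<Rightarrow> bool list \<Rightarrow> bool" where
  "differ_only_at k x y \<longleftrightarrow> length x = length y \<and> (\<forall>j<length x. j \<noteq> k \<longrightarrow> x ! j = y ! j)"

lemma local_op_eq: "local_op k A x y = (if differ_only_at k x y then A (x ! k) (y ! k) else 0)"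
  by (simp add: local_op_def differ_only_at_def)

lemma differ_only_at_update:
  "k < length x \<Longrightarrow> differ_only_at k (x[k := c]) y = differ_only_at k x y"
  by (auto simp: differ_only_at_def nth_list_update)

lemma sum_local_op:
  assumes x: "x \<in> bits N" and k: "k < N"
  shows "(\<Sum>y\<in>bits N. local_op k A x y * g y) = (\<Sum>c\<in>UNIV. A (x ! k) c * g (x[k := c]))"
proof -
  have lx: "length x = N" using x by (simp add: bits_def)
  have inj: "inj (\<lambda>c. x[k := c])"
    by (rule injI) (metis k lx nth_list_update_eq)
  have "(\<Sum>c\<in>UNIV. A (x ! k) c * g (x[k := c])) = (\<Sum>y\<in>range (\<lambda>c. x[k := c]). A (x ! k) (y ! k) * g y)"
    unfolding sum.reindex[OF inj] using k lx by simp
  also have "\<dots> = (\<Sum>y\<in>bits N. local_op k A x y * g y)"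
  proof (rule sum.mono_neutral_cong_left)
    show "range (\<lambda>c. x[k := c]) \<subseteq> bits N" using lx by (auto simp: bits_def)
    have "y = x[k := y ! k]" if "differ_only_at k x y" for y
      using that k lx by (auto simp: differ_only_at_def list_eq_iff_nth_eq nth_list_update)
    then show "\<forall>y\<in>bits N - range (\<lambda>c. x[k := c]). local_op k A x y * g y = 0"
      by (auto simp: local_op_eq)
    show "\<And>y. y \<in> range (\<lambda>c. x[k := c]) \<Longrightarrow> A (x ! k) (y ! k) * g y = local_op k A x y * g y"
      using k lx by (auto simp: local_op_eq differ_only_at_def nth_list_update)
  qed simp
  finally show ?thesis by simp
qed

lemma mv_local_op_prod_vec:
  assumes x: "x \<in> bits N" and k: "k < N"
  shows "mv N (local_op k A) (prod_vec f) x = prod_vec (f(k := app2 A (f k))) x"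
proof -
  have lx: "length x = N" using x by (simp add: bits_def)
  have split_k: "prod_vec h z = h k (z ! k) * (\<Prod>j\<in>{..<N}-{k}. h j (z ! j))" if "length z = N" for h z
    unfolding prod_vec_def that using prod.remove[of "{..<N}" k] k by simp
  have rest: "(\<Prod>j\<in>{..<N}-{k}. h j (x[k := c] ! j)) = (\<Prod>j\<in>{..<N}-{k}. f j (x ! j))"
    if "\<forall>j\<noteq>k. h j = f j" for c h
    using that by (intro prod.cong) auto
  have "mv N (local_op k A) (prod_vec f) x = (\<Sum>c\<in>UNIV. A (x ! k) c * prod_vec f (x[k := c]))"
    unfolding mv_def using sum_local_op[OF x k] .
  also have "\<dots> = (\<Sum>c\<in>UNIV. A (x ! k) c * f k c) * (\<Prod>j\<in>{..<N}-{k}. f j (x ! j))"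
    using split_k[of "x[k := _]" f] rest[of f] lx k by (simp add: sum_distrib_right mult.assoc)
  also have "\<dots> = prod_vec (f(k := app2 A (f k))) x"
    using split_k[OF lx, of "f(k := app2 A (f k))"] rest[of "f(k := app2 A (f k))" "x ! k"] lx k
    by (simp add: app2_def)
  finally show ?thesis .
qed

definition op_mult :: "nat \<Rightarrow> qop \<Rightarrow> qop \<Rightarrow> qop" where
  "op_mult N A B x y = (\<Sum>z\<in>bits N. A x z * B z y)"

definition op_adj :: "qop \<Rightarrow> qop" where
  "op_adj A x y = cnj (A y x)"

definition op2_adj :: "op2 \<Rightarrow> op2" where
  "op2_adj A a b = cnj (A b a)"

lemma mv_op_mult: "mv N (op_mult N A B) v = mv N A (mv N B v)"
  unfolding mv_def op_mult_def
  by (auto simp: sum_distrib_left sum_distrib_right mult.assoc intro!: ext sum.swap)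

lemma inner_mv_op_adj: "inner N u (mv N (op_adj A) v) = inner N (mv N A u) v"
  unfolding inner_def mv_def op_adj_def
  by (auto simp: sum_distrib_left sum_distrib_right mult_ac cnj_sum intro: sum.swap)

lemma op_adj_local_op: "op_adj (local_op k A) = local_op k (op2_adj A)"
  by (auto simp: op_adj_def op2_adj_def local_op_def intro!: ext)

lemma op_mult_local_op:
  assumes x: "x \<in> bits N" and k: "k < N"
  shows "op_mult N (local_op k A) (local_op k B) x y = local_op k (\<lambda>a b. \<Sum>c\<in>UNIV. A a c * B c b) x y"
proof -
  have "length x = N" using x by (simp add: bits_def)
  then show ?thesis
    unfolding op_mult_def sum_local_op[OF x k] using k by (simp add: local_op_eq differ_only_at_update)
qed

lemma sum_list_local_op:
  "sum_list (map (\<lambda>p. local_op k (A p) x y) cs) = local_op k (\<lambda>a b. sum_list (map (\<lambda>p. A p a b) cs)) x y"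
  by (induction cs) (auto simp: local_op_def)

lemma local_op_one:
  "k < N \<Longrightarrow> x \<in> bits N \<Longrightarrow> y \<in> bits N \<Longrightarrow> local_op k (\<lambda>a b. if a = b then 1 else 0) x y = idop x y"
  by (auto simp: local_op_def idop_def bits_def list_eq_iff_nth_eq)

section \<open>Every LOCC protocol is a POVM\<close>

lemma sum_sum_list_swap:
  "(\<Sum>y\<in>A. sum_list (map (\<lambda>p. g p y) cs)) = sum_list (map (\<lambda>p. \<Sum>y\<in>A. g p y) cs)"
  by (induction cs) (auto simp: sum.distrib)

lemma Re_sum_list: "Re (sum_list xs) = sum_list (map Re xs)"
  by (induction xs) auto

lemma Reals_sum_list: "(\<And>x. x \<in> set xs \<Longrightarrow> x \<in> \<real>) \<Longrightarrow> sum_list xs \<in> \<real>"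
  by (induction xs) auto

lemma mv_sum_list:
  "mv N (\<lambda>x y. sum_list (map (\<lambda>p. F p x y) cs)) v = (\<lambda>x. sum_list (map (\<lambda>p. mv N (F p) v x) cs))"
  unfolding mv_def
  by (auto intro!: ext simp: mult.commute[of _ "v _"] sum_sum_list_swap simp flip: sum_list_const_mult)

lemma inner_sum_list:
  "inner N u (\<lambda>x. sum_list (map (\<lambda>p. F p x) cs)) = sum_list (map (\<lambda>p. inner N u (F p)) cs)"
  unfolding inner_def by (simp add: sum_sum_list_swap flip: sum_list_const_mult)

text \<open>The POVM element of guess i realised by a protocol, obtained by pulling the guess back
  through the Kraus operators (Heisenberg picture).\<close>

fun locc_effect :: "nat \<Rightarrow> locc \<Rightarrow> nat \<Rightarrow> qop" where
  "locc_effect N (Guess j) i = (\<lambda>x y. if j = i then idop x y else 0)"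
| "locc_effect N (Measure k cs) i = (\<lambda>x y. sum_list (map (\<lambda>p.
      op_mult N (op_adj (local_op k (fst p))) (op_mult N (locc_effect N (snd p) i) (local_op k (fst p))) x y) cs))"

lemma inner_locc_effect_Measure:
  "inner N v (mv N (locc_effect N (Measure k cs) i) v) = sum_list (map (\<lambda>p.
     inner N (mv N (local_op k (fst p)) v) (mv N (locc_effect N (snd p) i) (mv N (local_op k (fst p)) v))) cs)"
  by (simp only: locc_effect.simps mv_sum_list inner_sum_list mv_op_mult inner_mv_op_adj)

lemma guess_prob_eq_locc_effect: "guess_prob N T v i = Re (inner N v (mv N (locc_effect N T i) v))"
proof (induction T arbitrary: v)
  case (Guess j)
  then show ?case by (simp add: inner_mv_idop) (simp add: inner_def mv_def)
next
  case (Measure k cs)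
  show ?case
    unfolding inner_locc_effect_Measure Re_sum_list guess_prob.simps map_map o_def
    using Measure.IH by (intro arg_cong[where f=sum_list] map_cong) auto
qed

lemma psd_locc_effect: "psd N (locc_effect N T i)"
proof (induction T)
  case (Guess j)
  then show ?case
  proof (cases "j = i")
    case True
    then have effect: "locc_effect N (Guess j) i = idop" by auto
    show ?thesis
      unfolding psd_def effect inner_mv_idop unfolding inner_def sum_cnj_mult_self
      by (simp add: sum_nonneg)
  qed (simp add: psd_def inner_def mv_def)
next
  case (Measure k cs)
  have "psd N (locc_effect N (snd p) i)" if "p \<in> set cs" for p
    using Measure.IH[of p "snd p"] that by (cases p) auto
  then show ?case
    unfolding psd_def inner_locc_effect_Measure Re_sum_list
    by (auto simp: psd_def intro!: Reals_sum_list sum_list_nonneg)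
qed

lemma sum_3_op_mult:
  assumes "\<forall>z\<in>bits N. \<forall>w\<in>bits N. (\<Sum>i<3. F i z w) = idop z w"
  shows "(\<Sum>i<(3::nat). op_mult N A (op_mult N (F i) B) x y) = op_mult N A B x y"
proof -
  have idop_mult: "(\<Sum>w\<in>bits N. idop z w * B w y) = B z y" if "z \<in> bits N" for z
  proof -
    have "(\<Sum>w\<in>bits N. idop z w * B w y) = (\<Sum>w\<in>bits N. if w = z then B w y else 0)"
      unfolding idop_def by (rule sum.cong) auto
    thus ?thesis using that by simp
  qed
  have "(\<Sum>i<(3::nat). op_mult N A (op_mult N (F i) B) x y)
      = (\<Sum>z\<in>bits N. A x z * (\<Sum>w\<in>bits N. (\<Sum>i<(3::nat). F i z w) * B w y))"
    unfolding op_mult_def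
    by (simp add: sum_distrib_left sum_distrib_right mult.assoc sum.swap[of _ "{..<3::nat}"])
  also have "\<dots> = op_mult N A B x y"
    unfolding op_mult_def using assms idop_mult by (intro sum.cong) auto
  finally show ?thesis .
qed

lemma sum_locc_effect:
  assumes "wf_locc N T"
  shows "\<forall>x\<in>bits N. \<forall>y\<in>bits N. (\<Sum>i<3. locc_effect N T i x y) = idop x y"
  using assms
proof (induction T rule: wf_locc.induct)
  case (1 j)
  then show ?case by (auto simp: lessThan_Suc numeral_3_eq_3)
next
  case (2 k cs)
  show ?case
  proof (intro ballI)
    fix x y assume x: "x \<in> bits N" and y: "y \<in> bits N"
    have "(\<Sum>i<3. locc_effect N (Measure k cs) i x y)
        = sum_list (map (\<lambda>p. op_mult N (op_adj (local_op k (fst p))) (local_op k (fst p)) x y) cs)"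
      using 2(3) by (simp add: sum_sum_list_swap sum_3_op_mult cong: map_cong)
    also have "\<dots> = local_op k (\<lambda>a b. if a = b then 1 else 0) x y"
      using x 2(1,2) unfolding op_adj_local_op op_mult_local_op[OF x 2(1)] sum_list_local_op
      by (simp add: kraus_complete_def op2_adj_def o_def)
    finally show "(\<Sum>i<3. locc_effect N (Measure k cs) i x y) = idop x y"
      using local_op_one[OF 2(1) x y] by simp
  qed
qed

lemma povm3_locc_effect: "wf_locc N T \<Longrightarrow> povm3 N (locc_effect N T)"
  using sum_locc_effect psd_locc_effect unfolding povm3_def by blast

lemma locc_success_eq_success: "locc_success N T \<psi> = success N (locc_effect N T) \<psi>"
  unfolding locc_success_def success_def guess_prob_eq_locc_effect ..

lemma sum_lessThan_3: "(\<Sum>j<(3::nat). f j) = f 0 + f 1 + f 2"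
  unfolding numeral_3_eq_3 by (simp add: lessThan_Suc numeral_2_eq_2 ac_simps)

lemma nat_less_3_cases: "(i::nat) < 3 \<Longrightarrow> i = 0 \<or> i = 1 \<or> i = 2"
  by arith

lemma povm3_expectation_le:
  assumes P: "povm3 N P" and i: "i < 3"
  shows "Re (inner N v (mv N (P i) v)) \<le> Re (inner N v v)"
proof -
  have "(\<Sum>j<3. inner N v (mv N (P j) v)) = inner N v (mv N (\<lambda>x y. \<Sum>j<3. P j x y) v)"
    unfolding inner_def mv_def
    by (simp add: sum_distrib_left sum_distrib_right mult.assoc sum.swap[of _ "{..<3::nat}"])
  also have "\<dots> = inner N v (mv N idop v)"
    using P unfolding povm3_def mv_def by (intro inner_cong refl sum.cong) auto
  finally have total: "(\<Sum>j<3. Re (inner N v (mv N (P j) v))) = Re (inner N v v)"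
    by (metis Re_sum inner_mv_idop)
  have nonneg: "0 \<le> Re (inner N v (mv N (P j) v))" if "j < 3" for j
    using P that unfolding povm3_def psd_def by blast
  show ?thesis
    using nat_less_3_cases[OF i] total nonneg[of 0] nonneg[of 1] nonneg[of 2]
    by (auto simp: sum_lessThan_3)
qed

lemma success_le_1:
  assumes P: "povm3 N P" and normalised: "\<And>i. i < 3 \<Longrightarrow> Re (inner N (\<psi> i) (\<psi> i)) = 1"
  shows "success N P \<psi> \<le> 1"
proof -
  have "(\<Sum>i<3. Re (inner N (\<psi> i) (mv N (P i) (\<psi> i)))) \<le> (\<Sum>i<(3::nat). 1)"
    using povm3_expectation_le[OF P] normalised by (intro sum_mono) (metis lessThan_iff)
  thus ?thesis unfolding success_def by simp
qed

lemma
  assumes normalised: "\<And>i. i < 3 \<Longrightarrow> Re (inner N (\<psi> i) (\<psi> i)) = 1"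
  shows locc_success_le_P_LOCC: "wf_locc N T \<Longrightarrow> locc_success N T \<psi> \<le> P_LOCC N \<psi>"
    and P_LOCC_le_P_opt: "P_LOCC N \<psi> \<le> P_opt N \<psi>"
    and P_opt_le_1: "P_opt N \<psi> \<le> 1"
proof -
  let ?LOCC = "{locc_success N T \<psi> | T. wf_locc N T}"
  let ?POVM = "{success N P \<psi> | P. povm3 N P}"
  have sub: "?LOCC \<subseteq> ?POVM"
    using locc_success_eq_success povm3_locc_effect by blast
  have LOCC_ne: "?LOCC \<noteq> {}"
    using wf_locc.intros(1)[of 0 N] by auto
  have POVM_le: "\<forall>x\<in>?POVM. x \<le> 1"
    using success_le_1 normalised by blast
  then have bdd: "bdd_above ?POVM"
    by (auto simp: bdd_above_def)
  show "wf_locc N T \<Longrightarrow> locc_success N T \<psi> \<le> P_LOCC N \<psi>"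
    unfolding P_LOCC_def using bdd_above_mono[OF bdd sub] by (auto intro: cSup_upper)
  show "P_LOCC N \<psi> \<le> P_opt N \<psi>"
    unfolding P_LOCC_def P_opt_def by (rule cSup_subset_mono[OF LOCC_ne bdd sub])
  show "P_opt N \<psi> \<le> 1"
    unfolding P_opt_def using LOCC_ne sub POVM_le by (intro cSup_least) auto
qed

definition phase :: "nat \<Rightarrow> complex" where
  "phase N = - exp (2 * complex_of_real pi * \<i> / of_nat N)"

definition trine :: "nat \<Rightarrow> bool \<Rightarrow> real" where
  "trine j a = (if j = 0 then (if a then 0 else 1)
     else if j = 1 then (if a then sqrt 3 / 2 else 1 / 2) else (if a then sqrt 3 / 2 else - 1 / 2))"

definition trine_perp :: "nat \<Rightarrow> bool \<Rightarrow> real" where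
  "trine_perp j a = (if j = 0 then (if a then 1 else 0)
     else if j = 1 then (if a then - 1 / 2 else sqrt 3 / 2) else (if a then 1 / 2 else sqrt 3 / 2))"

definition qubit_state :: "nat \<Rightarrow> nat \<Rightarrow> vec2" where
  "qubit_state N i = (app2 (Umat N) ^^ i) ket0"

lemma psi_eq_prod_vec: "psi N i = prod_vec (\<lambda>_. qubit_state N i)"
  by (auto simp: psi_def prod_vec_def qubit_state_def intro!: ext)

lemma qubit_state_eq: "i < 3 \<Longrightarrow> qubit_state N i a = phase N ^ i * complex_of_real (trine i a)"
proof -
  have Umat_eq: "Umat N a b = phase N * Rot a b" for a b
    by (simp add: Umat_def phase_def)
  have state_1: "qubit_state N 1 = (\<lambda>a. phase N * complex_of_real (trine 1 a))"
    by (auto simp: qubit_state_def ket0_def trine_def app2_def UNIV_bool Umat_eq Rot_def intro!: ext)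
  have "qubit_state N 2 = app2 (Umat N) (qubit_state N 1)"
    by (simp add: qubit_state_def numeral_2_eq_2)
  then have "qubit_state N 2 a = (\<Sum>b\<in>UNIV. phase N * Rot a b * (phase N * complex_of_real (trine 1 b)))"
    unfolding state_1 app2_def Umat_eq by simp
  also have "\<dots> = phase N ^ 2 * complex_of_real (trine 2 a)"
    by (cases a) (simp_all add: UNIV_bool Rot_def trine_def power2_eq_square algebra_simps
        flip: of_real_mult)
  finally have "qubit_state N 2 a = phase N ^ 2 * complex_of_real (trine 2 a)" .
  moreover have "qubit_state N 0 a = complex_of_real (trine 0 a)"
    by (simp add: qubit_state_def ket0_def trine_def)
  moreover assume "i < 3"
  ultimately show ?thesis using state_1 nat_less_3_cases[of i] by auto
qed

definition proj2 :: "(bool \<Rightarrow> real) \<Rightarrow> op2" where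
  "proj2 u a b = complex_of_real (u a * u b)"

definition dot2 :: "(bool \<Rightarrow> real) \<Rightarrow> (bool \<Rightarrow> real) \<Rightarrow> real" where
  "dot2 u v = u False * v False + u True * v True"

lemma trine_unit: "j < 3 \<Longrightarrow> (trine j False)\<^sup>2 + (trine j True)\<^sup>2 = 1"
  by (auto simp: trine_def power_divide)

lemma trine_perp_unit: "j < 3 \<Longrightarrow> (trine_perp j False)\<^sup>2 + (trine_perp j True)\<^sup>2 = 1"
  by (auto simp: trine_perp_def power_divide)

lemma trine_overlap_sq: "i < 3 \<Longrightarrow> j < 3 \<Longrightarrow> (dot2 (trine j) (trine i))\<^sup>2 = (if j = i then 1 else 1 / 4)"
  by (drule nat_less_3_cases, drule nat_less_3_cases)
     (auto simp: dot2_def trine_def power2_eq_square algebra_simps)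

lemma trine_perp_overlap_sq:
  "i < 3 \<Longrightarrow> j < 3 \<Longrightarrow> (dot2 (trine_perp j) (trine i))\<^sup>2 = (if j = i then 0 else 3 / 4)"
  by (drule nat_less_3_cases, drule nat_less_3_cases)
     (auto simp: dot2_def trine_def trine_perp_def power2_eq_square algebra_simps)

lemma kraus_complete_trine_test: "j < 3 \<Longrightarrow> kraus_complete [proj2 (trine j), proj2 (trine_perp j)]"
  by (drule nat_less_3_cases)
     (auto simp: kraus_complete_def proj2_def trine_def trine_perp_def UNIV_bool power2_eq_square
        algebra_simps simp flip: of_real_mult of_real_add)

lemma sqnorm2_unimodular_mult:
  "cmod z = 1 \<Longrightarrow> sqnorm2 (\<lambda>a. z * complex_of_real (u a)) = (u False)\<^sup>2 + (u True)\<^sup>2"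
  by (simp add: sqnorm2_def UNIV_bool norm_mult)

lemma norm_phase [simp]: "cmod (phase N) = 1"
  by (simp add: phase_def)

lemma sqnorm2_qubit_state:
  assumes "i < 3" shows "sqnorm2 (qubit_state N i) = 1"
proof -
  have "qubit_state N i = (\<lambda>a. phase N ^ i * complex_of_real (trine i a))"
    using qubit_state_eq[OF assms] by auto
  then show ?thesis
    using sqnorm2_unimodular_mult[of "phase N ^ i" "trine i"] trine_unit[OF assms] by (simp add: norm_power)
qed

lemma sqnorm2_proj2_qubit_state:
  assumes i: "i < 3" and u: "(u False)\<^sup>2 + (u True)\<^sup>2 = 1"
  shows "sqnorm2 (app2 (proj2 u) (qubit_state N i)) = (dot2 u (trine i))\<^sup>2"
proof -
  have "app2 (proj2 u) (qubit_state N i) = (\<lambda>a. phase N ^ i * complex_of_real (u a * dot2 u (trine i)))"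
    using qubit_state_eq[OF i]
    by (auto simp: app2_def proj2_def UNIV_bool dot2_def algebra_simps intro!: ext)
  then have "sqnorm2 (app2 (proj2 u) (qubit_state N i))
      = (dot2 u (trine i))\<^sup>2 * ((u False)\<^sup>2 + (u True)\<^sup>2)"
    using sqnorm2_unimodular_mult[of "phase N ^ i" "\<lambda>a. u a * dot2 u (trine i)"]
    by (simp add: norm_power power_mult_distrib algebra_simps)
  then show ?thesis using u by simp
qed

lemma psi_normalised: "i < 3 \<Longrightarrow> Re (inner N (psi N i) (psi N i)) = 1"
  unfolding psi_eq_prod_vec inner_prod_vec_self by (simp add: sqnorm2_qubit_state)

section \<open>The exclusion protocol\<close>

text \<open>S is the set of hypotheses ruled out so far; parties 0, ..., k - 1 have already measured.\<close>

definition least_unexcluded :: "nat set \<Rightarrow> nat" where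
  "least_unexcluded S = (if 0 \<notin> S then 0 else if 1 \<notin> S then 1 else 2)"

function exclusion_protocol :: "nat \<Rightarrow> nat \<Rightarrow> nat set \<Rightarrow> locc" where
  "exclusion_protocol N k S = (if N \<le> k then Guess (least_unexcluded S) else
     Measure k [(proj2 (trine (k mod 3)), exclusion_protocol N (Suc k) S),
                (proj2 (trine_perp (k mod 3)), exclusion_protocol N (Suc k) (insert (k mod 3) S))])"
  by pat_completeness auto
termination by (relation "measure (\<lambda>(N, k, S). N - k)") auto

declare exclusion_protocol.simps [simp del]

lemma wf_exclusion_protocol: "wf_locc N (exclusion_protocol N k S)"
proof (induction N k S rule: exclusion_protocol.induct)
  case (1 N k S)
  then show ?case
    using kraus_complete_trine_test[of "k mod 3"]
    by (subst exclusion_protocol.simps) (auto simp: least_unexcluded_def intro: wf_locc.intros)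
qed

function exclusion_success :: "nat \<Rightarrow> nat \<Rightarrow> nat \<Rightarrow> nat set \<Rightarrow> real" where
  "exclusion_success N i k S = (if N \<le> k then (if least_unexcluded S = i then 1 else 0)
     else if k mod 3 = i then exclusion_success N i (Suc k) S
     else exclusion_success N i (Suc k) S / 4 + 3 / 4 * exclusion_success N i (Suc k) (insert (k mod 3) S))"
  by pat_completeness auto
termination by (relation "measure (\<lambda>(N, i, k, S). N - k)") auto

declare exclusion_success.simps [simp del]

lemma guess_prob_cong:
  "(\<And>x. x \<in> bits N \<Longrightarrow> v x = v' x) \<Longrightarrow> guess_prob N T v i = guess_prob N T v' i"
  unfolding guess_prob_eq_locc_effect by (metis inner_cong mv_cong)

lemma guess_prob_local_op_prod_vec:
  "k < N \<Longrightarrow> guess_prob N T (mv N (local_op k A) (prod_vec f)) i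
    = guess_prob N T (prod_vec (f(k := app2 A (f k)))) i"
  by (intro guess_prob_cong mv_local_op_prod_vec)

lemma prod_sqnorm2_update:
  fixes f :: "nat \<Rightarrow> vec2"
  shows "k < N \<Longrightarrow> (\<Prod>j<N. sqnorm2 ((f(k := u)) j)) = sqnorm2 u * (\<Prod>j\<in>{..<N}-{k}. sqnorm2 (f j))"
proof -
  assume "k < N"
  then have k: "k \<in> {..<N}" by simp
  have "(\<Prod>j\<in>{..<N}-{k}. sqnorm2 ((f(k := u)) j)) = (\<Prod>j\<in>{..<N}-{k}. sqnorm2 (f j))"
    by (rule prod.cong) auto
  then show ?thesis using prod.remove[OF finite_lessThan k, of "\<lambda>j. sqnorm2 ((f(k := u)) j)"] by simp
qed

text \<open>Parties before k may already have been projected, so only the qubits from k on are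
  assumed to be unmeasured copies of the trine state.\<close>

lemma guess_prob_exclusion_protocol:
  assumes i: "i < 3" and unmeasured: "\<forall>j\<ge>k. f j = qubit_state N i"
  shows "guess_prob N (exclusion_protocol N k S) (prod_vec f) i
    = (\<Prod>j<N. sqnorm2 (f j)) * exclusion_success N i k S"
  using unmeasured
proof (induction N k S arbitrary: f rule: exclusion_protocol.induct)
  case (1 N k S)
  show ?case
  proof (cases "N \<le> k")
    case True
    then show ?thesis
      using inner_prod_vec_self[of N f] by (simp add: exclusion_protocol.simps exclusion_success.simps)
  next
    case False
    then have kN: "k < N" by simp
    define j where "j = k mod 3"
    have j: "j < 3" by (simp add: j_def)
    have fk: "f k = qubit_state N i" using "1.prems" by simp
    have others: "(\<Prod>j<N. sqnorm2 (f j)) = (\<Prod>j\<in>{..<N}-{k}. sqnorm2 (f j))"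
      using prod_sqnorm2_update[OF kN, of f "f k"]
      unfolding fun_upd_triv by (simp add: fk sqnorm2_qubit_state[OF i])
    have branch: "guess_prob N (exclusion_protocol N (Suc k) S') (mv N (local_op k (proj2 u)) (prod_vec f)) i
        = (\<Prod>j<N. sqnorm2 (f j)) * ((dot2 u (trine i))\<^sup>2 * exclusion_success N i (Suc k) S')"
      if IH: "\<And>g. \<forall>j\<ge>Suc k. g j = qubit_state N i \<Longrightarrow> guess_prob N (exclusion_protocol N (Suc k) S')
              (prod_vec g) i = (\<Prod>j<N. sqnorm2 (g j)) * exclusion_success N i (Suc k) S'"
        and u: "(u False)\<^sup>2 + (u True)\<^sup>2 = 1" for S' u
    proof -
      have "guess_prob N (exclusion_protocol N (Suc k) S') (mv N (local_op k (proj2 u)) (prod_vec f)) i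
          = guess_prob N (exclusion_protocol N (Suc k) S') (prod_vec (f(k := app2 (proj2 u) (f k)))) i"
        using False by (intro guess_prob_local_op_prod_vec) simp
      also have "\<dots> = (\<Prod>j<N. sqnorm2 ((f(k := app2 (proj2 u) (f k))) j)) * exclusion_success N i (Suc k) S'"
        using "1.prems" by (intro IH) simp
      also have "\<dots> = (\<Prod>j<N. sqnorm2 (f j)) * ((dot2 u (trine i))\<^sup>2 * exclusion_success N i (Suc k) S')"
        unfolding prod_sqnorm2_update[OF kN] fk sqnorm2_proj2_qubit_state[OF i u] others
        by simp
      finally show ?thesis .
    qed
    show ?thesis
      using False branch[OF "1.IH"(1)[OF False] trine_unit[OF j]]
        branch[OF "1.IH"(2)[OF False] trine_perp_unit[OF j]]
        trine_overlap_sq[OF i j] trine_perp_overlap_sq[OF i j]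
      by (simp add: exclusion_protocol.simps exclusion_success.simps[of N i k S] j_def algebra_simps)
  qed
qed

section \<open>A false hypothesis rarely survives\<close>

definition tests_left :: "nat \<Rightarrow> nat \<Rightarrow> nat \<Rightarrow> nat" where
  "tests_left N k j = card {m. k \<le> m \<and> m < N \<and> m mod 3 = j}"

lemma tests_left_eq_0: "N \<le> k \<Longrightarrow> tests_left N k j = 0"
  by (simp add: tests_left_def)

lemma tests_left_step:
  assumes k: "k < N" shows "tests_left N k j = tests_left N (Suc k) j + (if k mod 3 = j then 1 else 0)"
proof -
  have fin: "finite {m. Suc k \<le> m \<and> m < N \<and> m mod 3 = j}"
    by (rule finite_subset[of _ "{..<N}"]) auto
  show ?thesis
  proof (cases "k mod 3 = j")
    case True
    then have "{m. k \<le> m \<and> m < N \<and> m mod 3 = j} = insert k {m. Suc k \<le> m \<and> m < N \<and> m mod 3 = j}"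
      using k by auto
    then show ?thesis unfolding tests_left_def using fin True by simp
  next
    case False
    then have "{m. k \<le> m \<and> m < N \<and> m mod 3 = j} = {m. Suc k \<le> m \<and> m < N \<and> m mod 3 = j}"
      using k by (auto simp: Suc_le_eq order_le_less)
    then show ?thesis unfolding tests_left_def using False by simp
  qed
qed

lemma tests_left_ge: "j < 3 \<Longrightarrow> N div 3 \<le> tests_left N 0 j"
proof -
  assume j: "j < 3"
  have "inj_on (\<lambda>t. 3 * t + j) {..<N div 3}" by (auto simp: inj_on_def)
  then have "card ((\<lambda>t. 3 * t + j) ` {..<N div 3}) = N div 3" by (simp add: card_image)
  moreover have "(\<lambda>t. 3 * t + j) ` {..<N div 3} \<subseteq> {m. 0 \<le> m \<and> m < N \<and> m mod 3 = j}"
  proof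
    fix m assume "m \<in> (\<lambda>t. 3 * t + j) ` {..<N div 3}"
    then obtain t where t: "t < N div 3" "m = 3 * t + j" by auto
    have "3 * t + 3 \<le> 3 * (N div 3)" using t(1) by simp
    also have "\<dots> \<le> N" by simp
    finally show "m \<in> {m. 0 \<le> m \<and> m < N \<and> m mod 3 = j}" using t j by auto
  qed
  moreover have "finite {m. 0 \<le> m \<and> m < N \<and> m mod 3 = j}"
    by (rule finite_subset[of _ "{..<N}"]) auto
  ultimately show ?thesis unfolding tests_left_def by (metis card_mono)
qed

definition survival_bound :: "nat \<Rightarrow> nat \<Rightarrow> nat set \<Rightarrow> nat \<Rightarrow> nat \<Rightarrow> real" where
  "survival_bound N i S k j = (if j \<in> S \<or> j = i then 0 else (1 / 4) ^ tests_left N k j)"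

lemma exclusion_success_ge:
  "i < 3 \<Longrightarrow> i \<notin> S \<Longrightarrow> 1 - (\<Sum>j<3. survival_bound N i S k j) \<le> exclusion_success N i k S"
proof (induction N i k S rule: exclusion_success.induct)
  case (1 N i k S)
  show ?case
  proof (cases "N \<le> k")
    case True
    then show ?thesis using "1.prems" nat_less_3_cases[of i]
      by (subst exclusion_success.simps)
         (auto simp: sum_lessThan_3 survival_bound_def tests_left_eq_0 least_unexcluded_def)
  next
    case False
    define j where "j = k mod 3"
    have j: "j < 3" by (simp add: j_def)
    have sum_step: "(\<Sum>j'<3. survival_bound N i S' k j')
        = (\<Sum>j'<3. survival_bound N i S' (Suc k) j') - 3 / 4 * survival_bound N i S' (Suc k) j" for S'
    proof -
      have "survival_bound N i S' k j'
          = (if j' = j then survival_bound N i S' (Suc k) j' / 4 else survival_bound N i S' (Suc k) j')" for j'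
        using False by (auto simp: survival_bound_def tests_left_step j_def)
      then show ?thesis using nat_less_3_cases[OF j] by (auto simp: sum_lessThan_3)
    qed
    have ES_step: "exclusion_success N i k S = (if j = i then exclusion_success N i (Suc k) S
        else exclusion_success N i (Suc k) S / 4 + 3 / 4 * exclusion_success N i (Suc k) (insert j S))"
      using False by (subst exclusion_success.simps) (simp add: j_def)
    have IH_keep: "1 - (\<Sum>j'<3. survival_bound N i S (Suc k) j') \<le> exclusion_success N i (Suc k) S"
      using "1.IH"(1,2) False "1.prems" by (cases "k mod 3 = i") auto
    consider "j = i \<or> j \<in> S" | "j \<noteq> i" "j \<notin> S" by blast
    then show ?thesis
    proof cases
      case 1
      then have "survival_bound N i S (Suc k) j = 0" by (auto simp: survival_bound_def)
      moreover have "exclusion_success N i k S = exclusion_success N i (Suc k) S"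
        using 1 ES_step by (auto simp: insert_absorb)
      ultimately show ?thesis using IH_keep sum_step[of S] by simp
    next
      case 2
      have IH_excl: "1 - (\<Sum>j'<3. survival_bound N i (insert j S) (Suc k) j')
          \<le> exclusion_success N i (Suc k) (insert j S)"
        using "1.IH"(3) False "1.prems" 2 by (simp add: j_def)
      have "(\<Sum>j'<3. survival_bound N i (insert j S) (Suc k) j')
          = (\<Sum>j'<3. survival_bound N i S (Suc k) j') - survival_bound N i S (Suc k) j"
        using nat_less_3_cases[OF j] by (auto simp: sum_lessThan_3 survival_bound_def)
      then show ?thesis using IH_keep IH_excl 2 ES_step sum_step[of S] by simp
    qed
  qed
qed

lemma locc_success_exclusion_protocol:
  "1 - 3 * (1 / 4) ^ (N div 3) \<le> locc_success N (exclusion_protocol N 0 {}) (psi N)"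
proof -
  have correct: "1 - 3 * (1 / 4) ^ (N div 3) \<le> guess_prob N (exclusion_protocol N 0 {}) (psi N i) i"
    if i: "i < 3" for i
  proof -
    have "guess_prob N (exclusion_protocol N 0 {}) (psi N i) i = exclusion_success N i 0 {}"
      using guess_prob_exclusion_protocol[OF i, of 0 "\<lambda>_. qubit_state N i"]
      unfolding psi_eq_prod_vec by (simp add: sqnorm2_qubit_state[OF i])
    moreover have "survival_bound N i {} 0 j \<le> (1 / 4) ^ (N div 3)" if "j < 3" for j
      using tests_left_ge[OF that, of N] by (auto simp: survival_bound_def intro!: power_decreasing)
    then have "(\<Sum>j<3. survival_bound N i {} 0 j) \<le> 3 * (1 / 4) ^ (N div 3)"
      using sum_bounded_above[of "{..<3::nat}" "survival_bound N i {} 0"] by simp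
    ultimately show ?thesis
      using exclusion_success_ge[OF i, of "{}" N 0] by simp
  qed
  show ?thesis
    using correct[of 0] correct[of 1] correct[of 2] unfolding locc_success_def sum_lessThan_3 by simp
qed

lemma P_LOCC_psi_ge: "1 - 3 * (1 / 4) ^ (N div 3) \<le> P_LOCC N (psi N)"
  using locc_success_exclusion_protocol locc_success_le_P_LOCC[OF psi_normalised wf_exclusion_protocol]
  by (rule order_trans)

lemma LIMSEQ_exclusion_bound: "(\<lambda>N. 1 - 3 * (1 / 4 :: real) ^ (N div 3)) \<longlonglongrightarrow> 1"
proof -
  have "filterlim (\<lambda>N::nat. N div 3) sequentially sequentially"
    unfolding filterlim_at_top
  proof
    fix Z :: nat
    show "eventually (\<lambda>N. Z \<le> N div 3) sequentially"
      using eventually_ge_at_top[of "3 * Z"] by eventually_elim auto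
  qed
  then have "(\<lambda>N. (1 / 4 :: real) ^ (N div 3)) \<longlonglongrightarrow> 0"
    using filterlim_compose[OF LIMSEQ_power_zero[of "1 / 4 :: real"]] by simp
  from tendsto_diff[OF tendsto_const[of 1] tendsto_mult[OF tendsto_const[of 3] this]]
  show ?thesis by simp
qed

theorem mainTheorem14:
  shows "(\<lambda>N. P_LOCC N (psi N)) \<longlonglongrightarrow> 1 \<and> (\<lambda>N. P_opt N (psi N)) \<longlonglongrightarrow> 1
    \<and> (\<lambda>N. P_opt N (psi N) - P_LOCC N (psi N)) \<longlonglongrightarrow> 0"
proof -
  have lower: "1 - 3 * (1 / 4) ^ (N div 3) \<le> P_LOCC N (psi N)"
    and LOCC_le_opt: "P_LOCC N (psi N) \<le> P_opt N (psi N)"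
    and opt_le_1: "P_opt N (psi N) \<le> 1" for N
    using P_LOCC_psi_ge P_LOCC_le_P_opt[OF psi_normalised] P_opt_le_1[OF psi_normalised] by auto
  have LOCC_le_1: "P_LOCC N (psi N) \<le> 1" for N
    using LOCC_le_opt opt_le_1 by (rule order_trans)
  have opt_ge: "1 - 3 * (1 / 4) ^ (N div 3) \<le> P_opt N (psi N)" for N
    using lower LOCC_le_opt by (rule order_trans)
  have LOCC: "(\<lambda>N. P_LOCC N (psi N)) \<longlonglongrightarrow> 1"
    by (rule tendsto_sandwich[OF _ _ LIMSEQ_exclusion_bound tendsto_const]) (simp_all add: lower LOCC_le_1)
  have opt: "(\<lambda>N. P_opt N (psi N)) \<longlonglongrightarrow> 1"
    by (rule tendsto_sandwich[OF _ _ LIMSEQ_exclusion_bound tendsto_const]) (simp_all add: opt_ge opt_le_1)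
  show ?thesis
    using LOCC opt tendsto_diff[OF opt LOCC] by simp
qed

end
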